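(* Let $\mathcal T$ be an orbital category. The following are equivalent: (a) $\mathcal T$ is atomic; (b) for every map $f:U\to V$ in $\mathcal T$ and every $X\in\mathbb F_U$, if $\mathrm{Ind}_U^VX\simeq *_V$ then $f$ is an isomorphism and $X\simeq *_U$.
   Context: For a small category $\mathcal T$, $\mathbb F_{\mathcal T}$ is the full subcategory of $\mathrm{Fun}(\mathcal T^{op},\mathrm{Set})$ on finite coproducts of representables. $\mathcal T$ is orbital if $\mathbb F_{\mathcal T}$ has pullbacks, and atomic if every morphism $r:X\to Y$ in $\mathcal T$ admitting a section $s:Y\to X$ with $r\circ s=\mathrm{id}$ is an isomorphism. $\mathbb F_V:=\mathbb F_{\mathcal T,/V}$, $*_V$ is its terminal object, and for $f:U\to V$, $\mathrm{Ind}_U^V:\mathbb F_U\to\mathbb F_V$ is postcomposition with $f$. *)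

theory Defs
  imports Main
begin

record ('o, 'm) cat =
  Ob   :: "'o set"
  Ar   :: "'m set"
  Dom  :: "'m \<Rightarrow> 'o"
  Cod  :: "'m \<Rightarrow> 'o"
  Idt  :: "'o \<Rightarrow> 'm"
  Comp :: "'m \<Rightarrow> 'm \<Rightarrow> 'm"   (* Comp C g f = g \<circ> f *)

definition hom :: "('o, 'm) cat \<Rightarrow> 'o \<Rightarrow> 'o \<Rightarrow> 'm set" where
  "hom C A B = {f \<in> Ar C. Dom C f = A \<and> Cod C f = B}"

definition is_category :: "('o, 'm) cat \<Rightarrow> bool" where
  "is_category C \<longleftrightarrow>
     (\<forall>f \<in> Ar C. Dom C f \<in> Ob C \<and> Cod C f \<in> Ob C) \<and>
     (\<forall>A \<in> Ob C. Idt C A \<in> hom C A A) \<and>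
     (\<forall>A \<in> Ob C. \<forall>B \<in> Ob C. \<forall>C' \<in> Ob C. \<forall>f \<in> hom C A B. \<forall>g \<in> hom C B C'.
        Comp C g f \<in> hom C A C') \<and>
     (\<forall>f \<in> Ar C. Comp C (Idt C (Cod C f)) f = f \<and> Comp C f (Idt C (Dom C f)) = f) \<and>
     (\<forall>f \<in> Ar C. \<forall>g \<in> Ar C. \<forall>h \<in> Ar C. Cod C f = Dom C g \<longrightarrow> Cod C g = Dom C h \<longrightarrow>
        Comp C h (Comp C g f) = Comp C (Comp C h g) f)"

definition is_iso :: "('o, 'm) cat \<Rightarrow> 'm \<Rightarrow> bool" where
  "is_iso C f \<longleftrightarrow> f \<in> Ar C \<and>
     (\<exists>g \<in> hom C (Cod C f) (Dom C f).
        Comp C g f = Idt C (Dom C f) \<and> Comp C f g = Idt C (Cod C f))"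

definition atomic :: "('o, 'm) cat \<Rightarrow> bool" where
  "atomic C \<longleftrightarrow> (\<forall>X \<in> Ob C. \<forall>Y \<in> Ob C. \<forall>r \<in> hom C X Y. \<forall>s \<in> hom C Y X.
      Comp C r s = Idt C Y \<longrightarrow> is_iso C r)"

text \<open>An object of F_T is given by a finite list xs of objects of T; it denotes the
presheaf  B \<mapsto> \<Coprod>_{i < length xs} Hom_T(B, xs!i), whose elements over B are the pairs
(i, g) with g : B \<rightarrow> xs!i, and on which a morphism u : B' \<rightarrow> B acts by precomposition.
Morphisms in F_T are natural transformations between such presheaves (full subcategory
of presheaves), represented extensionally.\<close>

definition fob :: "('o, 'm) cat \<Rightarrow> 'o list \<Rightarrow> bool" where
  "fob C xs \<longleftrightarrow> set xs \<subseteq> Ob C"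

definition psh_el :: "('o, 'm) cat \<Rightarrow> 'o list \<Rightarrow> 'o \<Rightarrow> (nat \<times> 'm) set" where
  "psh_el C xs B = {(i, g). i < length xs \<and> g \<in> hom C B (xs ! i)}"

definition psh_act :: "('o, 'm) cat \<Rightarrow> nat \<times> 'm \<Rightarrow> 'm \<Rightarrow> nat \<times> 'm" where
  "psh_act C x u = (fst x, Comp C (snd x) u)"

type_synonym ('o, 'm) ntrans = "'o \<Rightarrow> nat \<times> 'm \<Rightarrow> nat \<times> 'm"

definition fmor :: "('o, 'm) cat \<Rightarrow> 'o list \<Rightarrow> 'o list \<Rightarrow> ('o, 'm) ntrans \<Rightarrow> bool" where
  "fmor C xs ys \<eta> \<longleftrightarrow>
     (\<forall>B \<in> Ob C. \<forall>x \<in> psh_el C xs B. \<eta> B x \<in> psh_el C ys B) \<and>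
     (\<forall>B \<in> Ob C. \<forall>B' \<in> Ob C. \<forall>u \<in> hom C B' B. \<forall>x \<in> psh_el C xs B.
        \<eta> B' (psh_act C x u) = psh_act C (\<eta> B x) u) \<and>
     (\<forall>B x. (B \<notin> Ob C \<or> x \<notin> psh_el C xs B) \<longrightarrow> \<eta> B x = undefined)"

definition fid :: "('o, 'm) cat \<Rightarrow> 'o list \<Rightarrow> ('o, 'm) ntrans" where
  "fid C xs = (\<lambda>B x. if B \<in> Ob C \<and> x \<in> psh_el C xs B then x else undefined)"

text \<open>fcomp C xs \<theta> \<eta> = \<theta> \<circ> \<eta>, where xs is the source of \<eta>.\<close>
definition fcomp :: "('o, 'm) cat \<Rightarrow> 'o list \<Rightarrow> ('o, 'm) ntrans \<Rightarrow> ('o, 'm) ntrans \<Rightarrow> ('o, 'm) ntrans" where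
  "fcomp C xs \<theta> \<eta> = (\<lambda>B x. if B \<in> Ob C \<and> x \<in> psh_el C xs B then \<theta> B (\<eta> B x) else undefined)"

text \<open>Yoneda image of f : U \<rightarrow> V, a morphism y(U) = [U] \<rightarrow> [V] = y(V).\<close>
definition yon :: "('o, 'm) cat \<Rightarrow> 'o \<Rightarrow> 'm \<Rightarrow> ('o, 'm) ntrans" where
  "yon C U f = (\<lambda>B x. if B \<in> Ob C \<and> x \<in> psh_el C [U] B then (0, Comp C f (snd x)) else undefined)"

definition is_pullback ::
  "('o, 'm) cat \<Rightarrow> 'o list \<Rightarrow> 'o list \<Rightarrow> ('o, 'm) ntrans \<Rightarrow> ('o, 'm) ntrans \<Rightarrow>
   'o list \<Rightarrow> ('o, 'm) ntrans \<Rightarrow> ('o, 'm) ntrans \<Rightarrow> bool" where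
  "is_pullback C X Y f g P p1 p2 \<longleftrightarrow>
     fob C P \<and> fmor C P X p1 \<and> fmor C P Y p2 \<and> fcomp C P f p1 = fcomp C P g p2 \<and>
     (\<forall>Q q1 q2. fob C Q \<and> fmor C Q X q1 \<and> fmor C Q Y q2 \<and> fcomp C Q f q1 = fcomp C Q g q2
        \<longrightarrow> (\<exists>!u. fmor C Q P u \<and> fcomp C Q p1 u = q1 \<and> fcomp C Q p2 u = q2))"

definition orbital :: "('o, 'm) cat \<Rightarrow> bool" where
  "orbital C \<longleftrightarrow> (\<forall>X Y Z f g. fob C X \<and> fob C Y \<and> fob C Z \<and> fmor C X Z f \<and> fmor C Y Z g
      \<longrightarrow> (\<exists>P p1 p2. is_pullback C X Y f g P p1 p2))"

text \<open>Objects of F_V are pairs (X, p) with X in F_T and p : X \<rightarrow> y(V) = [V].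
An isomorphism in the slice is an isomorphism h of F_T commuting with the structure maps.\<close>

definition slice_iso :: "('o, 'm) cat \<Rightarrow> 'o \<Rightarrow> 'o list \<times> ('o, 'm) ntrans \<Rightarrow> 'o list \<times> ('o, 'm) ntrans \<Rightarrow> bool" where
  "slice_iso C V Xp Yq \<longleftrightarrow> (case Xp of (X, p) \<Rightarrow> case Yq of (Y, q) \<Rightarrow>
     (\<exists>h h'. fmor C X Y h \<and> fmor C Y X h' \<and>
        fcomp C X h' h = fid C X \<and> fcomp C Y h h' = fid C Y \<and> fcomp C X q h = p))"

definition term_obj :: "('o, 'm) cat \<Rightarrow> 'o \<Rightarrow> 'o list \<times> ('o, 'm) ntrans" where
  "term_obj C V = ([V], fid C [V])"

definition Ind :: "('o, 'm) cat \<Rightarrow> 'o \<Rightarrow> 'm \<Rightarrow> 'o list \<times> ('o, 'm) ntrans \<Rightarrow> 'o list \<times> ('o, 'm) ntrans" where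
  "Ind C U f Xp = (case Xp of (X, p) \<Rightarrow> (X, fcomp C X (yon C U f) p))"

end

theory Submission
  imports Defs
begin

text \<open>An object (X, p) of \<open>\<bbbF>\<^sub>V\<close> is isomorphic to \<open>*\<^sub>V\<close> exactly when p : X \<rightarrow> y(V) is an
isomorphism of \<open>\<bbbF>\<^sub>T\<close>. So if Ind(X, p) is terminal, y(f) \<circ> p is invertible and y(f) is a
split epimorphism; by Yoneda, evaluating a section at \<open>id\<^sub>V\<close> gives a section of f. Atomicity
makes f, hence y(f), invertible, and then so is p = y(f)\<inverse> \<circ> (y(f) \<circ> p). Conversely, for a
retraction r with section s, Ind(y(s)) = y(r \<circ> s) is terminal, so r must be invertible.\<close>

lemma cat_hom_ob:
  assumes "is_category C" "f \<in> hom C A B"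
  shows "A \<in> Ob C" "B \<in> Ob C"
  using assms unfolding is_category_def hom_def by auto

lemma cat_comp_hom:
  assumes "is_category C" "f \<in> hom C A B" "g \<in> hom C B D"
  shows "Comp C g f \<in> hom C A D"
  using assms cat_hom_ob[OF assms(1,2)] cat_hom_ob[OF assms(1,3)] unfolding is_category_def by blast

lemma cat_comp_assoc:
  assumes "is_category C" "f \<in> hom C A B" "g \<in> hom C B D" "h \<in> hom C D E"
  shows "Comp C h (Comp C g f) = Comp C (Comp C h g) f"
  using assms unfolding is_category_def hom_def by auto

lemma cat_id_hom:
  assumes "is_category C" "A \<in> Ob C"
  shows "Idt C A \<in> hom C A A"
  using assms unfolding is_category_def by auto

lemma cat_id_left:
  assumes "is_category C" "f \<in> hom C A B"
  shows "Comp C (Idt C B) f = f"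
  using assms unfolding is_category_def hom_def by auto

lemma psh_el_single: "x \<in> psh_el C [U] B \<longleftrightarrow> fst x = 0 \<and> snd x \<in> hom C B U"
  by (cases x) (auto simp: psh_el_def)

lemma psh_act_in_psh_el:
  assumes "is_category C" "u \<in> hom C B' B" "x \<in> psh_el C xs B"
  shows "psh_act C x u \<in> psh_el C xs B'"
  using assms cat_comp_hom[OF assms(1,2)] by (auto simp: psh_act_def psh_el_def)

lemma fmor_in_psh_el:
  "fmor C xs ys \<eta> \<Longrightarrow> B \<in> Ob C \<Longrightarrow> x \<in> psh_el C xs B \<Longrightarrow> \<eta> B x \<in> psh_el C ys B"
  unfolding fmor_def by blast

lemma fmor_natural:
  "fmor C xs ys \<eta> \<Longrightarrow> B \<in> Ob C \<Longrightarrow> B' \<in> Ob C \<Longrightarrow> u \<in> hom C B' B \<Longrightarrow> x \<in> psh_el C xs B \<Longrightarrow>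
    \<eta> B' (psh_act C x u) = psh_act C (\<eta> B x) u"
  unfolding fmor_def by blast

lemma fmor_undefined:
  "fmor C xs ys \<eta> \<Longrightarrow> \<not> (B \<in> Ob C \<and> x \<in> psh_el C xs B) \<Longrightarrow> \<eta> B x = undefined"
  unfolding fmor_def by blast

lemma fmor_fid:
  assumes "is_category C"
  shows "fmor C xs xs (fid C xs)"
  unfolding fmor_def fid_def using psh_act_in_psh_el[OF assms] by auto

lemma fmor_fcomp:
  assumes "is_category C" "fmor C xs ys \<eta>" "fmor C ys zs \<theta>"
  shows "fmor C xs zs (fcomp C xs \<theta> \<eta>)"
  unfolding fmor_def
proof (intro conjI ballI allI impI)
  fix B B' u x
  assume B: "B \<in> Ob C" "B' \<in> Ob C" and u: "u \<in> hom C B' B" and x: "x \<in> psh_el C xs B"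
  have "\<theta> B' (\<eta> B' (psh_act C x u)) = psh_act C (\<theta> B (\<eta> B x)) u"
    using B u x fmor_natural[OF assms(2)] fmor_natural[OF assms(3)] fmor_in_psh_el[OF assms(2)]
    by simp
  then show "fcomp C xs \<theta> \<eta> B' (psh_act C x u) = psh_act C (fcomp C xs \<theta> \<eta> B x) u"
    using B x psh_act_in_psh_el[OF assms(1) u x] by (simp add: fcomp_def)
qed (auto simp: fcomp_def intro: fmor_in_psh_el[OF assms(3)] fmor_in_psh_el[OF assms(2)])

lemma fcomp_fid_left:
  assumes "fmor C xs ys \<eta>"
  shows "fcomp C xs (fid C ys) \<eta> = \<eta>"
proof (intro ext)
  fix B x
  show "fcomp C xs (fid C ys) \<eta> B x = \<eta> B x"
    using fmor_in_psh_el[OF assms, of B x] fmor_undefined[OF assms, of B x]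
    by (auto simp: fcomp_def fid_def)
qed

lemma fcomp_assoc:
  "fmor C xs ys \<eta> \<Longrightarrow> fcomp C xs (fcomp C ys \<zeta> \<theta>) \<eta> = fcomp C xs \<zeta> (fcomp C xs \<theta> \<eta>)"
  by (auto simp: fcomp_def intro!: ext dest: fmor_in_psh_el)

definition fiso :: "('o, 'm) cat \<Rightarrow> 'o list \<Rightarrow> 'o list \<Rightarrow> ('o, 'm) ntrans \<Rightarrow> bool" where
  "fiso C xs ys \<eta> \<longleftrightarrow> fmor C xs ys \<eta> \<and>
     (\<exists>\<eta>'. fmor C ys xs \<eta>' \<and> fcomp C xs \<eta>' \<eta> = fid C xs \<and> fcomp C ys \<eta> \<eta>' = fid C ys)"

lemma fiso_fid:
  assumes "is_category C"
  shows "fiso C xs xs (fid C xs)"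
  unfolding fiso_def using fmor_fid[OF assms] fcomp_fid_left[OF fmor_fid[OF assms]] by blast

lemma fiso_cancel_left:
  assumes "is_category C" and g_iso: "fiso C ys zs g" and p: "fmor C xs ys p"
    and gp_iso: "fiso C xs zs (fcomp C xs g p)"
  shows "fiso C xs ys p"
proof -
  obtain g' where g: "fmor C ys zs g" and g'g: "fcomp C ys g' g = fid C ys"
    using g_iso unfolding fiso_def by blast
  obtain k where k: "fmor C zs xs k" and kgp: "fcomp C xs k (fcomp C xs g p) = fid C xs"
    and gpk: "fcomp C zs (fcomp C xs g p) k = fid C zs"
    using gp_iso unfolding fiso_def by blast
  have kg: "fmor C ys xs (fcomp C ys k g)" using fmor_fcomp[OF assms(1) g k] .
  have "fcomp C xs g' (fcomp C xs g p) = fcomp C xs (fcomp C ys g' g) p"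
    by (rule fcomp_assoc[OF p, symmetric])
  also have "\<dots> = p" using g'g fcomp_fid_left[OF p] by simp
  finally have p_eq: "p = fcomp C xs g' (fcomp C xs g p)" ..
  have "fcomp C ys p (fcomp C ys k g)
      = fcomp C ys g' (fcomp C ys (fcomp C xs g p) (fcomp C ys k g))"
    by (subst p_eq) (rule fcomp_assoc[OF kg])
  also have "\<dots> = fcomp C ys g' (fcomp C ys (fcomp C zs (fcomp C xs g p) k) g)"
    by (simp only: fcomp_assoc[OF g])
  also have "\<dots> = fid C ys"
    using gpk fcomp_fid_left[OF g] g'g by simp
  finally have "fcomp C ys p (fcomp C ys k g) = fid C ys" .
  moreover have "fcomp C xs (fcomp C ys k g) p = fid C xs"
    using kgp by (simp only: fcomp_assoc[OF p])
  ultimately show ?thesis unfolding fiso_def using p kg by blast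
qed

lemma slice_iso_term_obj_iff:
  "slice_iso C V (X, q) (term_obj C V) \<longleftrightarrow> fiso C X [V] q"
  unfolding slice_iso_def term_obj_def fiso_def using fcomp_fid_left by fastforce

lemma yon_fmor:
  assumes "is_category C" "f \<in> hom C U V"
  shows "fmor C [U] [V] (yon C U f)"
  unfolding fmor_def
proof (intro conjI ballI allI impI)
  fix B B' u x
  assume B: "B \<in> Ob C" "B' \<in> Ob C" and u: "u \<in> hom C B' B" and x: "x \<in> psh_el C [U] B"
  have "Comp C f (Comp C (snd x) u) = Comp C (Comp C f (snd x)) u"
    using cat_comp_assoc[OF assms(1) u _ assms(2)] x by (simp add: psh_el_single)
  then show "yon C U f B' (psh_act C x u) = psh_act C (yon C U f B x) u"
    using B x psh_act_in_psh_el[OF assms(1) u x] by (simp add: yon_def psh_act_def)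
qed (auto simp: yon_def psh_el_single intro: cat_comp_hom[OF assms(1) _ assms(2)])

lemma yon_comp:
  assumes "is_category C" "f \<in> hom C A B" "g \<in> hom C B D"
  shows "fcomp C [A] (yon C B g) (yon C A f) = yon C A (Comp C g f)"
  using cat_comp_hom[OF assms(1) _ assms(2)] cat_comp_assoc[OF assms(1) _ assms(2,3)]
  by (auto simp: fcomp_def yon_def psh_el_single intro!: ext)

lemma yon_id:
  assumes "is_category C"
  shows "yon C A (Idt C A) = fid C [A]"
  using cat_id_left[OF assms] by (auto simp: yon_def fid_def psh_el_single prod_eq_iff intro!: ext)

lemma fiso_yon:
  assumes "is_category C" "f \<in> hom C U V" "is_iso C f"
  shows "fiso C [U] [V] (yon C U f)"
proof -
  obtain g where g: "g \<in> hom C V U" and "Comp C g f = Idt C U" "Comp C f g = Idt C V"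
    using assms(2,3) unfolding is_iso_def hom_def by auto
  have "fcomp C [U] (yon C V g) (yon C U f) = fid C [U]"
    using yon_comp[OF assms(1,2) g] \<open>Comp C g f = Idt C U\<close> yon_id[OF assms(1)] by simp
  moreover have "fcomp C [V] (yon C U f) (yon C V g) = fid C [V]"
    using yon_comp[OF assms(1) g assms(2)] \<open>Comp C f g = Idt C V\<close> yon_id[OF assms(1)] by simp
  ultimately show ?thesis
    unfolding fiso_def using yon_fmor[OF assms(1,2)] yon_fmor[OF assms(1) g] by blast
qed

lemma split_epi_of_yon:
  assumes "is_category C" "V \<in> Ob C" "fmor C [V] [U] \<sigma>"
    and f\<sigma>: "fcomp C [V] (yon C U f) \<sigma> = fid C [V]"
  shows "\<exists>s \<in> hom C V U. Comp C f s = Idt C V"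
proof -
  define y where "y = ((0::nat), Idt C V)"
  have y: "y \<in> psh_el C [V] V" using cat_id_hom[OF assms(1,2)] by (simp add: y_def psh_el_single)
  then have \<sigma>y: "\<sigma> V y \<in> psh_el C [U] V" using fmor_in_psh_el[OF assms(3) assms(2)] by blast
  have "yon C U f V (\<sigma> V y) = y"
    using fun_cong[OF fun_cong[OF f\<sigma>, of V], of y] assms(2) y by (simp add: fcomp_def fid_def)
  then have "Comp C f (snd (\<sigma> V y)) = Idt C V"
    using assms(2) \<sigma>y by (simp add: yon_def y_def)
  then show ?thesis using \<sigma>y by (auto simp: psh_el_single)
qed

lemma Ind_reflects_terminal_if_atomic:
  assumes cat: "is_category C" and "atomic C" and f: "f \<in> hom C U V"
    and p: "fmor C X [U] p" and terminal: "slice_iso C V (Ind C U f (X, p)) (term_obj C V)"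
  shows "is_iso C f \<and> slice_iso C U (X, p) (term_obj C U)"
proof -
  have "fiso C X [V] (fcomp C X (yon C U f) p)"
    using terminal by (simp add: Ind_def slice_iso_term_obj_iff)
  then obtain q where q: "fmor C [V] X q"
    and "fcomp C [V] (fcomp C X (yon C U f) p) q = fid C [V]"
    unfolding fiso_def by blast
  then have "fcomp C [V] (yon C U f) (fcomp C [V] p q) = fid C [V]"
    by (simp add: fcomp_assoc[OF q])
  then obtain s where "s \<in> hom C V U" "Comp C f s = Idt C V"
    using split_epi_of_yon[OF cat _ fmor_fcomp[OF cat q p]] cat_hom_ob[OF cat f] by blast
  then have "is_iso C f"
    using \<open>atomic C\<close> f cat_hom_ob[OF cat f] unfolding atomic_def by blast
  moreover have "fiso C X [U] p"
    using fiso_cancel_left[OF cat fiso_yon[OF cat f \<open>is_iso C f\<close>] p] \<open>fiso C X [V] _\<close> .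
  ultimately show ?thesis by (simp add: slice_iso_term_obj_iff)
qed

lemma Ind_yon_section_terminal:
  assumes "is_category C" "r \<in> hom C A B" "s \<in> hom C B A" "Comp C r s = Idt C B"
  shows "slice_iso C B (Ind C A r ([B], yon C B s)) (term_obj C B)"
proof -
  have "Ind C A r ([B], yon C B s) = ([B], fid C [B])"
    using yon_comp[OF assms(1,3,2)] assms(4) yon_id[OF assms(1)] by (simp add: Ind_def)
  then show ?thesis
    using fiso_fid[OF assms(1)] by (simp add: slice_iso_term_obj_iff)
qed

theorem mainTheorem4:
  fixes T :: "('o, 'm) cat"
  assumes "is_category T" and "orbital T"
  shows "atomic T \<longleftrightarrow>
    (\<forall>U \<in> Ob T. \<forall>V \<in> Ob T. \<forall>f \<in> hom T U V. \<forall>X p.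
       fob T X \<and> fmor T X [U] p \<and> slice_iso T V (Ind T U f (X, p)) (term_obj T V)
       \<longrightarrow> is_iso T f \<and> slice_iso T U (X, p) (term_obj T U))"
    (is "_ \<longleftrightarrow> ?Ind_reflects_terminal")
proof
  assume "atomic T"
  show ?Ind_reflects_terminal
  proof (intro ballI allI impI, elim conjE)
    fix U V f X p
    assume "f \<in> hom T U V" "fmor T X [U] p" "slice_iso T V (Ind T U f (X, p)) (term_obj T V)"
    then show "is_iso T f \<and> slice_iso T U (X, p) (term_obj T U)"
      by (rule Ind_reflects_terminal_if_atomic[OF assms(1) \<open>atomic T\<close>])
  qed
next
  assume reflects: ?Ind_reflects_terminal
  show "atomic T"
    unfolding atomic_def
  proof (intro ballI impI)
    fix A B r s
    assume A: "A \<in> Ob T" and B: "B \<in> Ob T" and r: "r \<in> hom T A B" and s: "s \<in> hom T B A"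
      and rs: "Comp T r s = Idt T B"
    have "fob T [B]" using B by (simp add: fob_def)
    with yon_fmor[OF assms(1) s] Ind_yon_section_terminal[OF assms(1) r s rs]
    show "is_iso T r" using reflects[rule_format, OF A B r] by blast
  qed
qed

end
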